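(* Let $G=(A\cup B,E)$ be a bipartite graph containing distinct vertices $a_1,a_2,a_3,a_4\in A$ and distinct $b_1,b_2\in B$ with $a_1b_1\in E$, $a_2b_1\notin E$, $a_2b_2\in E$, $a_3b_1\in E$, $a_3b_2\notin E$, $a_4b_2\in E$ (the adjacencies $a_1b_2$ and $a_4b_1$ being arbitrary). Then there exists an ordering $\sigma_A$ of $A$ such that $G$ admits no Stick representation in which, ordering the horizontal segments by where they touch the ground line from left to right, the $i$th horizontal segment corresponds to the $i$th vertex of $\sigma_A$.
   Context: A Stick representation of a bipartite graph $G=(A\cup B,E)$ (with $A$ horizontal and $B$ vertical) assigns to each vertex of $A$ a horizontal segment and to each vertex of $B$ a vertical segment such that the left endpoints of all horizontal segments and the bottom endpoints of all vertical segments lie on a fixed ground line $\ell$ of slope $-1$, and a horizontal and a vertical segment intersect if and only if the corresponding vertices are adjacent in $G$. *)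

theory Defs
  imports Main "HOL-Library.Product_Plus" Complex_Main
begin

text \<open>Ground line of slope -1: the points (t, c - t).\<close>

definition hseg :: "real \<Rightarrow> real \<Rightarrow> real \<Rightarrow> (real \<times> real) set" where
  "hseg c p l = {(u, c - p) | u. p \<le> u \<and> u \<le> p + l}"

definition vseg :: "real \<Rightarrow> real \<Rightarrow> real \<Rightarrow> (real \<times> real) set" where
  "vseg c q h = {(q, v) | v. c - q \<le> v \<and> v \<le> c - q + h}"

definition stick_rep ::
  "'v set \<Rightarrow> 'v set \<Rightarrow> ('v \<times> 'v) set \<Rightarrow> real \<Rightarrow> ('v \<Rightarrow> real) \<Rightarrow> ('v \<Rightarrow> real)
     \<Rightarrow> ('v \<Rightarrow> real) \<Rightarrow> ('v \<Rightarrow> real) \<Rightarrow> bool" where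
  "stick_rep A B E c p l q h \<longleftrightarrow>
     (\<forall>a\<in>A. 0 \<le> l a) \<and> (\<forall>b\<in>B. 0 \<le> h b) \<and>
     (\<forall>a\<in>A. \<forall>b\<in>B. (a, b) \<in> E \<longleftrightarrow> hseg c (p a) (l a) \<inter> vseg c (q b) (h b) \<noteq> {})"

definition respects_order :: "'v list \<Rightarrow> ('v \<Rightarrow> real) \<Rightarrow> bool" where
  "respects_order \<sigma> p \<longleftrightarrow> (\<forall>i j. i < j \<and> j < length \<sigma> \<longrightarrow> p (\<sigma> ! i) < p (\<sigma> ! j))"

end

theory Submission
  imports Defs
begin

text \<open>Order A as a1, a2, a3, a4 followed by the rest. If a horizontal segment
  starts between the left endpoints of two segments touching the vertical segment of b, it already
  reaches the height and the abscissa range of that vertical segment, so it meets it iff it is long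
  enough to reach its abscissa. Applied to a2 between a1, a3 (both adjacent to b1) this puts
  the stick of b2 strictly left of that of b1; applied to a3 between a2, a4 (both adjacent to
  b2) it puts the stick of b1 strictly left of that of b2.\<close>

lemma hseg_vseg_meet_iff:
  "hseg c p l \<inter> vseg c q h \<noteq> {} \<longleftrightarrow> p \<le> q \<and> q \<le> p + l \<and> q - p \<le> h"
proof
  assume "hseg c p l \<inter> vseg c q h \<noteq> {}"
  then show "p \<le> q \<and> q \<le> p + l \<and> q - p \<le> h"
    unfolding hseg_def vseg_def by auto
next
  assume "p \<le> q \<and> q \<le> p + l \<and> q - p \<le> h"
  then have "(q, c - p) \<in> hseg c p l \<inter> vseg c q h"
    unfolding hseg_def vseg_def by auto
  then show "hseg c p l \<inter> vseg c q h \<noteq> {}" by blast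
qed

lemma stick_rep_adjacent_iff:
  assumes "stick_rep A B E c p l q h" "a \<in> A" "b \<in> B"
  shows "(a, b) \<in> E \<longleftrightarrow> p a \<le> q b \<and> q b \<le> p a + l a \<and> q b - p a \<le> h b"
  using assms unfolding stick_rep_def by (simp add: hseg_vseg_meet_iff)

lemma stick_rep_between_adjacent_iff:
  assumes rep: "stick_rep A B E c p l q h"
    and "a \<in> A" "a' \<in> A" "a'' \<in> A" "b \<in> B"
    and "p a \<le> p a'" "p a' \<le> p a''"
    and "(a, b) \<in> E" "(a'', b) \<in> E"
  shows "(a', b) \<in> E \<longleftrightarrow> q b \<le> p a' + l a'"
proof -
  have "p a'' \<le> q b" and "q b - p a \<le> h b"
    using assms stick_rep_adjacent_iff[OF rep] by blast+
  then have "p a' \<le> q b" and "q b - p a' \<le> h b"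
    using assms(6,7) by linarith+
  then show ?thesis
    using assms stick_rep_adjacent_iff[OF rep] by blast
qed

lemma stick_rep_forbidden_pattern:
  assumes rep: "stick_rep A B E c p l q h"
    and A: "a1 \<in> A" "a2 \<in> A" "a3 \<in> A" "a4 \<in> A" and B: "b1 \<in> B" "b2 \<in> B"
    and "p a1 \<le> p a2" "p a2 \<le> p a3" "p a3 \<le> p a4"
    and "(a1, b1) \<in> E" "(a2, b1) \<notin> E" "(a2, b2) \<in> E"
    and "(a3, b1) \<in> E" "(a3, b2) \<notin> E" "(a4, b2) \<in> E"
  shows False
proof -
  have "p a2 + l a2 < q b1"
    using stick_rep_between_adjacent_iff[OF rep A(1,2,3) B(1)] assms(8-) by fastforce
  moreover have "q b2 \<le> p a2 + l a2"
    using stick_rep_adjacent_iff[OF rep A(2) B(2)] assms(13) by blast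
  moreover have "p a3 + l a3 < q b2"
    using stick_rep_between_adjacent_iff[OF rep A(2,3,4) B(2)] assms(8-) by fastforce
  moreover have "q b1 \<le> p a3 + l a3"
    using stick_rep_adjacent_iff[OF rep A(3) B(1)] assms(14) by blast
  ultimately show False by linarith
qed

lemma respects_order_iff_sorted_wrt:
  "respects_order \<sigma> p \<longleftrightarrow> sorted_wrt (\<lambda>x y. p x < p y) \<sigma>"
  unfolding respects_order_def sorted_wrt_iff_nth_less by blast

lemma finite_distinct_list_with_prefix:
  assumes "finite A" "distinct xs" "set xs \<subseteq> A"
  obtains ys where "distinct (xs @ ys)" "set (xs @ ys) = A"
proof -
  obtain ys where "distinct ys" "set ys = A - set xs"
    using finite_distinct_list[of "A - set xs"] assms(1) by blast
  then show thesis
    using that assms(2,3) by auto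
qed

theorem mainTheorem7:
  fixes A B :: "'v set" and E :: "('v \<times> 'v) set"
    and a1 a2 a3 a4 b1 b2 :: 'v
  assumes "finite A" "finite B" "A \<inter> B = {}" "E \<subseteq> A \<times> B"
    and "a1 \<in> A" "a2 \<in> A" "a3 \<in> A" "a4 \<in> A" "distinct [a1, a2, a3, a4]"
    and "b1 \<in> B" "b2 \<in> B" "b1 \<noteq> b2"
    and "(a1, b1) \<in> E" "(a2, b1) \<notin> E" "(a2, b2) \<in> E"
    and "(a3, b1) \<in> E" "(a3, b2) \<notin> E" "(a4, b2) \<in> E"
  shows "\<exists>\<sigma>. distinct \<sigma> \<and> set \<sigma> = A \<and>
           \<not> (\<exists>c p l q h. stick_rep A B E c p l q h \<and> respects_order \<sigma> p)"
proof -
  obtain ys where \<sigma>: "distinct ([a1, a2, a3, a4] @ ys)" "set ([a1, a2, a3, a4] @ ys) = A"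
    using finite_distinct_list_with_prefix[of A "[a1, a2, a3, a4]"] assms(1,5-9) by auto
  have "\<not> (stick_rep A B E c p l q h \<and> respects_order ([a1, a2, a3, a4] @ ys) p)"
    for c p l q h
  proof
    assume rep: "stick_rep A B E c p l q h \<and> respects_order ([a1, a2, a3, a4] @ ys) p"
    then have "p a1 \<le> p a2" "p a2 \<le> p a3" "p a3 \<le> p a4"
      by (simp_all add: respects_order_iff_sorted_wrt less_imp_le)
    then show False
      using stick_rep_forbidden_pattern[of A B E c p l q h] rep assms(5-8,10,11,13-) by blast
  qed
  then show ?thesis
    using \<sigma> by blast
qed

end
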